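(* Let $\Phi\in C([0,\infty))\cap C^1((0,\infty))$ with $\Phi(0)=0$, and suppose there are $0<a\le A<\infty$ with $a\le\Phi'(\xi)\le A$ for all $\xi\in(0,\infty)$. Let $\kappa$ be a nonnegative smooth compactly supported function on $\mathbb{R}^d$ with $\int\kappa=1$ and $\kappa^\epsilon=\epsilon^{-d}\kappa(\cdot/\epsilon)$. Then there is a constant $\vartheta\in[1,\infty)$ such that for every $\epsilon>0$, every nonnegative $u\in L^1_{\rm loc}(\mathbb{R}^d)$ and every $x\in\mathbb{R}^d$, \[(\Phi^{1/2}(u))^\epsilon(x)\le\vartheta\,\Phi^{1/2}(u^\epsilon(x)),\] where $u^\epsilon=u*\kappa^\epsilon$ and $(\Phi^{1/2}(u))^\epsilon=\Phi^{1/2}(u)*\kappa^\epsilon$. *)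

theory Defs
  imports "HOL-Analysis.Analysis"
begin

inductive iter_pderiv :: "('a::euclidean_space \<Rightarrow> real) \<Rightarrow> ('a \<Rightarrow> real) \<Rightarrow> bool"
  for f where
  base: "iter_pderiv f f"
| step: "iter_pderiv f g \<Longrightarrow> (\<And>x. (g has_derivative g' x) (at x)) \<Longrightarrow> v \<in> Basis
          \<Longrightarrow> iter_pderiv f (\<lambda>x. g' x v)"

definition smooth_fun :: "('a::euclidean_space \<Rightarrow> real) \<Rightarrow> bool" where
  "smooth_fun f \<longleftrightarrow> (\<forall>g. iter_pderiv f g \<longrightarrow> (\<forall>x. g differentiable (at x)))"

definition compact_support :: "('a::euclidean_space \<Rightarrow> real) \<Rightarrow> bool" where
  "compact_support f \<longleftrightarrow> compact (closure {x. f x \<noteq> 0})"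

definition rescale_kernel :: "('a::euclidean_space \<Rightarrow> real) \<Rightarrow> real \<Rightarrow> 'a \<Rightarrow> real" where
  "rescale_kernel \<kappa> \<epsilon> z = (1 / \<epsilon> ^ DIM('a)) * \<kappa> ((1 / \<epsilon>) *\<^sub>R z)"

definition conv :: "('a::euclidean_space \<Rightarrow> real) \<Rightarrow> ('a \<Rightarrow> real) \<Rightarrow> 'a \<Rightarrow> real" where
  "conv f g x = (\<integral>y. f y * g (x - y) \<partial>lborel)"

definition locally_integrable :: "('a::euclidean_space \<Rightarrow> real) \<Rightarrow> bool" where
  "locally_integrable u \<longleftrightarrow> (\<forall>K. compact K \<longrightarrow> set_integrable lborel K u)"

end

theory Submission imports Defs begin

text \<open>By the mean value theorem, \<open>a \<xi> \<le> \<Phi> \<xi> \<le> A \<xi>\<close> for \<open>\<xi> \<ge> 0\<close>. For fixed \<open>x\<close> and \<open>\<epsilon>\<close>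
  the weight \<open>y \<mapsto> \<kappa>\<^sup>\<epsilon>(x - y)\<close> is a probability density, so Jensen's inequality for the
  concave square root bounds the mollification of \<open>sqrt (\<Phi> u) \<le> sqrt (A u)\<close> by
  \<open>sqrt (A u\<^sup>\<epsilon>(x)) \<le> sqrt (A / a) sqrt (\<Phi> (u\<^sup>\<epsilon>(x)))\<close>. Jensen's inequality itself follows by
  integrating \<open>sqrt v \<le> (t v + 1/t) / 2\<close> against the density and minimising over \<open>t > 0\<close>.\<close>

lemma linear_bounds_of_deriv_bounds:
  fixes \<Phi> :: "real \<Rightarrow> real"
  assumes "continuous_on {0..} \<Phi>" "\<Phi> differentiable_on {0<..}" "\<Phi> 0 = 0"
    and "\<And>\<xi>. \<xi> > 0 \<Longrightarrow> a \<le> deriv \<Phi> \<xi> \<and> deriv \<Phi> \<xi> \<le> A"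
    and "\<xi> \<ge> 0"
  shows "a * \<xi> \<le> \<Phi> \<xi> \<and> \<Phi> \<xi> \<le> A * \<xi>"
proof (cases "\<xi> = 0")
  case True
  then show ?thesis using assms(3) by simp
next
  case False
  with assms(5) have "0 < \<xi>" by simp
  moreover have "continuous_on {0..\<xi>} \<Phi>"
    using assms(1) by (rule continuous_on_subset) auto
  moreover have "\<forall>z. 0 < z \<and> z < \<xi> \<longrightarrow> \<Phi> differentiable (at z)"
    using assms(2) by (simp add: differentiable_on_eq_differentiable_at)
  ultimately obtain l z where z: "0 < z" "DERIV \<Phi> z :> l" "\<Phi> \<xi> - \<Phi> 0 = (\<xi> - 0) * l"
    using MVT by blast
  from z(2) have "deriv \<Phi> z = l" by (rule DERIV_imp_deriv)
  with assms(4)[OF z(1)] have "a \<le> l" "l \<le> A" by auto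
  then show ?thesis
    using z(3) assms(3) \<open>0 < \<xi>\<close> by (simp add: mult_left_mono mult.commute)
qed

lemma sqrt_le_am_gm:
  fixes v t :: real
  assumes "0 \<le> v" "0 < t"
  shows "sqrt v \<le> (t * v + 1 / t) / 2"
proof -
  have "0 \<le> (t * sqrt v - 1)\<^sup>2" by simp
  then have "2 * t * sqrt v \<le> t\<^sup>2 * v + 1"
    using assms(1) by (simp add: power2_eq_square algebra_simps)
  then show ?thesis
    using assms(2) by (simp add: field_simps power2_eq_square)
qed

lemma le_sqrt_if_le_am_gm:
  fixes L V :: real
  assumes "0 \<le> V" and am_gm: "\<And>t. 0 < t \<Longrightarrow> L \<le> (t * V + 1 / t) / 2"
  shows "L \<le> sqrt V"
proof (cases "V = 0")
  case True
  show ?thesis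
  proof (rule ccontr)
    assume "\<not> L \<le> sqrt V"
    with True have "0 < L" by simp
    with am_gm[of "1 / L"] True show False by simp
  qed
next
  case False
  with assms(1) have "0 < V" by simp
  with am_gm[of "1 / sqrt V"] show ?thesis
    by (simp add: real_div_sqrt)
qed

lemma weighted_integral_le_sqrt:
  fixes K v f :: "'a \<Rightarrow> real"
  assumes K: "integrable M K" "integral\<^sup>L M K = 1" "\<And>y. 0 \<le> K y"
    and v: "integrable M (\<lambda>y. v y * K y)" "\<And>y. 0 \<le> v y"
    and f: "\<And>y. f y \<le> sqrt (v y)"
  shows "(\<integral>y. f y * K y \<partial>M) \<le> sqrt (\<integral>y. v y * K y \<partial>M)"
proof -
  have V: "0 \<le> (\<integral>y. v y * K y \<partial>M)"
    using v(2) K(3) by (intro integral_nonneg_AE) auto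
  show ?thesis
  proof (cases "integrable M (\<lambda>y. f y * K y)")
    case False
    then show ?thesis using V by (simp add: not_integrable_integral_eq)
  next
    case True
    show ?thesis
    proof (rule le_sqrt_if_le_am_gm[OF V])
      fix t :: real assume "0 < t"
      have "f y * K y \<le> (t * (v y * K y) + 1 / t * K y) / 2" for y
      proof -
        have "f y * K y \<le> (t * v y + 1 / t) / 2 * K y"
          using f[of y] sqrt_le_am_gm[OF v(2) \<open>0 < t\<close>, of y] K(3)[of y]
          by (intro mult_right_mono) auto
        then show ?thesis by (simp add: algebra_simps)
      qed
      then have "(\<integral>y. f y * K y \<partial>M) \<le> (\<integral>y. (t * (v y * K y) + 1 / t * K y) / 2 \<partial>M)"
        using True v(1) K(1) by (intro integral_mono) auto
      also have "\<dots> = (t * (\<integral>y. v y * K y \<partial>M) + 1 / t) / 2"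
        using v(1) K(1,2) by simp
      finally show "(\<integral>y. f y * K y \<partial>M) \<le> (t * (\<integral>y. v y * K y \<partial>M) + 1 / t) / 2" .
    qed
  qed
qed

lemma smooth_fun_imp_continuous:
  assumes "smooth_fun f"
  shows "continuous_on UNIV f"
proof -
  have "f differentiable (at z)" for z
    using assms iter_pderiv.base unfolding smooth_fun_def by blast
  then show ?thesis
    by (simp add: differentiable_imp_continuous_on differentiable_on_def differentiable_at_withinI)
qed

lemma compact_support_imp_bounded:
  assumes "continuous_on UNIV f" "compact_support f"
  shows "bounded (range f)"
proof -
  let ?S = "closure {z. f z \<noteq> 0}"
  have "compact (f ` ?S)"
    using assms continuous_on_subset unfolding compact_support_def
    by (blast intro: compact_continuous_image)
  moreover have "range f \<subseteq> insert 0 (f ` ?S)"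
    using closure_subset by fastforce
  ultimately show ?thesis
    by (meson bounded_insert bounded_subset compact_imp_bounded)
qed

lemma integral_rescale_kernel_reflect:
  fixes \<kappa> :: "'a::euclidean_space \<Rightarrow> real"
  assumes [measurable]: "\<kappa> \<in> borel_measurable borel" and "0 < \<epsilon>"
  shows "(\<integral>y. rescale_kernel \<kappa> \<epsilon> (x - y) \<partial>lborel) = (\<integral>z. \<kappa> z \<partial>lborel)"
proof -
  let ?g = "\<lambda>y. rescale_kernel \<kappa> \<epsilon> (x - y)"
  let ?affine = "\<lambda>z. x + (- \<epsilon>) *\<^sub>R z"
  have [measurable]: "?g \<in> borel_measurable borel"
    unfolding rescale_kernel_def by measurable
  have "(\<integral>y. ?g y \<partial>lborel)
      = (\<integral>y. ?g y \<partial>density (distr lborel borel ?affine) (\<lambda>_. ennreal (\<epsilon> ^ DIM('a))))"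
    using lborel_affine[of "- \<epsilon>" x] \<open>0 < \<epsilon>\<close> by (simp add: ennreal_power)
  also have "\<dots> = (\<integral>y. \<epsilon> ^ DIM('a) * ?g y \<partial>distr lborel borel ?affine)"
    using \<open>0 < \<epsilon>\<close> by (subst integral_density) auto
  also have "\<dots> = (\<integral>z. \<epsilon> ^ DIM('a) * ?g (?affine z) \<partial>lborel)"
    by (subst integral_distr) auto
  also have "\<dots> = (\<integral>z. \<kappa> z \<partial>lborel)"
    using \<open>0 < \<epsilon>\<close> by (intro Bochner_Integration.integral_cong) (auto simp: rescale_kernel_def)
  finally show ?thesis .
qed

lemma integrable_mult_compact_support:
  fixes u g :: "'a::euclidean_space \<Rightarrow> real"
  assumes u: "locally_integrable u"
    and g [measurable]: "g \<in> borel_measurable borel" "\<And>y. \<bar>g y\<bar> \<le> B"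
    and C: "compact C" "\<And>y. y \<notin> C \<Longrightarrow> g y = 0"
  shows "integrable lborel (\<lambda>y. u y * g y)"
proof -
  have uC: "integrable lborel (\<lambda>y. indicator C y * u y)"
    using u C(1) unfolding locally_integrable_def set_integrable_def by simp
  then have [measurable]: "(\<lambda>y. indicator C y * u y) \<in> borel_measurable borel"
    by (simp add: borel_measurable_integrable)
  have ug: "u y * g y = (indicator C y * u y) * g y" for y
    using C(2)[of y] by (cases "y \<in> C") auto
  have "integrable lborel (\<lambda>y. (indicator C y * u y) * g y)"
  proof (rule Bochner_Integration.integrable_bound[OF integrable_mult_right[OF uC, of B]])
    show "AE y in lborel. norm (indicator C y * u y * g y) \<le> norm (B * (indicator C y * u y))"
    proof (intro AE_I2)
      fix y
      have "\<bar>g y\<bar> \<le> \<bar>B\<bar>" using g(2)[of y] by linarith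
      then show "norm (indicator C y * u y * g y) \<le> norm (B * (indicator C y * u y))"
        by (simp add: abs_mult mult.commute mult_right_mono)
    qed
  qed measurable
  then show ?thesis by (simp only: ug)
qed

lemma integrable_mult_rescale_kernel_reflect:
  fixes u \<kappa> :: "'a::euclidean_space \<Rightarrow> real"
  assumes "locally_integrable u" "continuous_on UNIV \<kappa>" "compact_support \<kappa>" "0 < \<epsilon>"
  shows "integrable lborel (\<lambda>y. u y * rescale_kernel \<kappa> \<epsilon> (x - y))"
proof -
  let ?S = "closure {z. \<kappa> z \<noteq> 0}"
  obtain B where B: "\<And>z. \<bar>\<kappa> z\<bar> \<le> B"
    using compact_support_imp_bounded[OF assms(2,3)] unfolding bounded_real by blast
  have [measurable]: "\<kappa> \<in> borel_measurable borel"
    using assms(2) by (rule borel_measurable_continuous_onI)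
  show ?thesis
  proof (rule integrable_mult_compact_support[OF assms(1)])
    show "(\<lambda>y. rescale_kernel \<kappa> \<epsilon> (x - y)) \<in> borel_measurable borel"
      unfolding rescale_kernel_def by measurable
    show "\<bar>rescale_kernel \<kappa> \<epsilon> (x - y)\<bar> \<le> B / \<epsilon> ^ DIM('a)" for y
      using B assms(4) by (simp add: rescale_kernel_def abs_mult divide_right_mono)
    show "compact ((\<lambda>z. x - \<epsilon> *\<^sub>R z) ` ?S)"
      using assms(3) unfolding compact_support_def
      by (intro compact_continuous_image) (auto intro!: continuous_intros)
    show "rescale_kernel \<kappa> \<epsilon> (x - y) = 0" if "y \<notin> (\<lambda>z. x - \<epsilon> *\<^sub>R z) ` ?S" for y
    proof (rule ccontr)
      assume "rescale_kernel \<kappa> \<epsilon> (x - y) \<noteq> 0"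
      then have "(1 / \<epsilon>) *\<^sub>R (x - y) \<in> ?S"
        using closure_subset by (fastforce simp: rescale_kernel_def)
      moreover have "y = x - \<epsilon> *\<^sub>R ((1 / \<epsilon>) *\<^sub>R (x - y))"
        using assms(4) by simp
      ultimately show False using that by blast
    qed
  qed
qed

lemma conv_rescale_kernel_le_sqrt_conv:
  fixes u f \<kappa> :: "'a::euclidean_space \<Rightarrow> real"
  assumes \<kappa>: "continuous_on UNIV \<kappa>" "compact_support \<kappa>" "\<And>z. 0 \<le> \<kappa> z" "(\<integral>z. \<kappa> z \<partial>lborel) = 1"
    and "0 < \<epsilon>"
    and u: "locally_integrable u" "\<And>y. 0 \<le> u y"
    and f: "\<And>y. f y \<le> sqrt (u y)"
  shows "conv f (rescale_kernel \<kappa> \<epsilon>) x \<le> sqrt (conv u (rescale_kernel \<kappa> \<epsilon>) x)"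
proof -
  define K where "K y = rescale_kernel \<kappa> \<epsilon> (x - y)" for y
  have \<kappa>_meas: "\<kappa> \<in> borel_measurable borel"
    using \<kappa>(1) by (rule borel_measurable_continuous_onI)
  have K_int: "(\<integral>y. K y \<partial>lborel) = 1"
    unfolding K_def using integral_rescale_kernel_reflect[OF \<kappa>_meas \<open>0 < \<epsilon>\<close>] \<kappa>(4) by simp
  then have K_integrable: "integrable lborel K"
    using not_integrable_integral_eq by force
  have K_nonneg: "0 \<le> K y" for y
    unfolding K_def rescale_kernel_def using \<kappa>(3) \<open>0 < \<epsilon>\<close> by simp
  have uK: "integrable lborel (\<lambda>y. u y * K y)"
    unfolding K_def using integrable_mult_rescale_kernel_reflect u(1) \<kappa>(1,2) \<open>0 < \<epsilon>\<close> .
  show ?thesis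
    unfolding conv_def K_def[symmetric]
    using weighted_integral_le_sqrt[OF K_integrable K_int K_nonneg uK u(2) f] .
qed

theorem lemma7p4:
  fixes \<Phi> :: "real \<Rightarrow> real" and \<kappa> :: "'a::euclidean_space \<Rightarrow> real" and a A :: real
  assumes "continuous_on {0..} \<Phi>"
    and "\<Phi> C1_differentiable_on {0<..}"
    and "\<Phi> 0 = 0"
    and "0 < a" and "a \<le> A"
    and "\<And>\<xi>. \<xi> > 0 \<Longrightarrow> a \<le> deriv \<Phi> \<xi> \<and> deriv \<Phi> \<xi> \<le> A"
    and "\<And>x. \<kappa> x \<ge> 0"
    and "smooth_fun \<kappa>"
    and "compact_support \<kappa>"
    and "(\<integral>x. \<kappa> x \<partial>lborel) = 1"
  shows "\<exists>\<theta>::real. 1 \<le> \<theta> \<and>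
    (\<forall>\<epsilon>>0. \<forall>u::'a \<Rightarrow> real. \<forall>x.
       (\<forall>y. u y \<ge> 0) \<longrightarrow> locally_integrable u \<longrightarrow>
       conv (\<lambda>y. sqrt (\<Phi> (u y))) (rescale_kernel \<kappa> \<epsilon>) x
         \<le> \<theta> * sqrt (\<Phi> (conv u (rescale_kernel \<kappa> \<epsilon>) x)))"
proof -
  have \<Phi>_bounds: "a * \<xi> \<le> \<Phi> \<xi> \<and> \<Phi> \<xi> \<le> A * \<xi>" if "\<xi> \<ge> 0" for \<xi>
    using linear_bounds_of_deriv_bounds[OF assms(1) C1_diff_imp_diff[OF assms(2)] assms(3,6) that] .
  have \<kappa>_cont: "continuous_on UNIV \<kappa>"
    using assms(8) by (rule smooth_fun_imp_continuous)
  have \<theta>: "1 \<le> sqrt (A / a)"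
    using assms(4,5) by simp
  show ?thesis
  proof (intro exI[of _ "sqrt (A / a)"] conjI \<theta> allI impI)
    fix \<epsilon> :: real and u :: "'a \<Rightarrow> real" and x :: 'a
    assume "\<epsilon> > 0" and u: "\<forall>y. u y \<ge> 0" "locally_integrable u"
    let ?U = "conv u (rescale_kernel \<kappa> \<epsilon>) x"
    have "0 \<le> ?U"
      unfolding conv_def rescale_kernel_def using u(1) assms(7) \<open>\<epsilon> > 0\<close>
      by (intro integral_nonneg_AE) auto
    have "conv (\<lambda>y. sqrt (\<Phi> (u y))) (rescale_kernel \<kappa> \<epsilon>) x
        \<le> sqrt (conv (\<lambda>y. A * u y) (rescale_kernel \<kappa> \<epsilon>) x)"
      using u \<Phi>_bounds assms(4,5) \<kappa>_cont assms(7,9,10) \<open>\<epsilon> > 0\<close>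
      by (intro conv_rescale_kernel_le_sqrt_conv) (auto simp: locally_integrable_def)
    also have "\<dots> = sqrt (A / a) * sqrt (a * ?U)"
      using assms(4) by (simp add: conv_def mult.assoc flip: real_sqrt_mult)
    also have "\<dots> \<le> sqrt (A / a) * sqrt (\<Phi> ?U)"
      using \<Phi>_bounds[OF \<open>0 \<le> ?U\<close>] \<theta> by (intro mult_left_mono) simp_all
    finally show "conv (\<lambda>y. sqrt (\<Phi> (u y))) (rescale_kernel \<kappa> \<epsilon>) x \<le> sqrt (A / a) * sqrt (\<Phi> ?U)" .
  qed
qed

end
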